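(* In the setting described in the context (with $n$ sufficiently large), let $\kappa>0$ and let $\eta$ satisfy $0\le \eta\le \frac{1}{\sqrt n}$. Then any polytope $P\subseteq\mathbb{R}^{n+1}$ such that \[ P\subseteq K(\eta,\kappa)\subseteq \frac{n}{96\Delta^2\max\{\kappa,1\}}\,P \] has at least $\frac{m}{n}$ vertices.
   Context: Let $C_1$ be an absolute constant such that for every sufficiently large $n$ and every $2\le m\le \exp(n/C_1)$ there exist $y_1,\dots,y_m\in\mathbb{R}^n$ with $\frac12\sqrt n\le\|y_i\|\le 2\sqrt n$ and $|\langle y_i,y_j\rangle|\le C_1\sqrt{n\log m}$ for $i\ne j$. Let $C_2$ be an absolute constant such that for all unit vectors $v_1,\dots,v_m\in S^{n-1}$ and $X$ distributed as $N(0,I_n)$, uniformly on $\sqrt n S^{n-1}$, or uniformly on $\sqrt n B_2^n$, one has $\mathbb{P}(\max_{i}|\langle v_i,X\rangle|\ge C_2\sqrt{\log m})\le m^{-10}$. Set $C_0=\max(C_1,100C_2)$. Let $n$ be sufficiently large, $m$ an integer with $C_0 n\le m\le \exp(n/C_0)$, and $\Delta=C_0\sqrt{\log m}$. Let $x_1,\dots,x_m\in\mathbb{R}^n$ satisfy $\frac{\sqrt n}{2\Delta}\le\|x_i\|\le\frac{2\sqrt n}{\Delta}$ for all $i$ and $|\langle x_i,x_j\rangle|\le \frac{\sqrt n}{\Delta}$ for $i\ne j$. $B_2^n$ is the Euclidean unit ball. Define $Q=\operatorname{conv}\{\pm x_i\}$, $Q_1=\operatorname{conv}(Q\cup B_2^n)$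 and $Q_1^\circ=(Q_1)^\circ=Q^\circ\cap B_2^n$, where $L^\circ=\{y:\langle y,z\rangle\le1\ \forall z\in L\}$. Equip $\mathbb{R}^{n+1}$ with orthonormal basis $e_0,e_1,\dots,e_n$ and identify $\mathbb{R}^n$ with $\operatorname{span}\{e_1,\dots,e_n\}$. For $\eta\in\mathbb{R}$ and $\kappa>0$ set \[ K(\eta,\kappa)=\operatorname{conv}\big((1-\eta)e_0+Q,\ -\kappa\eta e_0+\kappa Q_1^\circ\big)\subseteq\mathbb{R}^{n+1}. \] *)

theory Defs
  imports "HOL-Analysis.Analysis" "HOL-Probability.Probability" "HOL-Library.Function_Algebras"
begin

text \<open>Finite-dimensional Euclidean spaces of varying dimension are represented inside the
  real vector space of all functions nat => real: R^n is the set of functions supported on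
  the index set {1..n} (coordinates e_1,...,e_n), and R^(n+1) is the set of functions supported
  on {0..n} (coordinates e_0,e_1,...,e_n), so that R^n is literally the span of e_1..e_n.\<close>

instantiation "fun" :: (type, real_vector) real_vector
begin
definition scaleR_fun :: "real \<Rightarrow> ('a \<Rightarrow> 'b) \<Rightarrow> 'a \<Rightarrow> 'b" where
  "scaleR_fun r f = (\<lambda>x. r *\<^sub>R f x)"
instance
  by standard (auto simp: scaleR_fun_def fun_eq_iff scaleR_add_right scaleR_add_left algebra_simps)
end

definition supp_in :: "nat set \<Rightarrow> (nat \<Rightarrow> real) set" where
  "supp_in I = {x. \<forall>i. i \<notin> I \<longrightarrow> x i = 0}"

definition Rn :: "nat \<Rightarrow> (nat \<Rightarrow> real) set" where
  "Rn n = supp_in {1..n}"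
definition Rn1 :: "nat \<Rightarrow> (nat \<Rightarrow> real) set" where
  "Rn1 n = supp_in {0..n}"

definition e0 :: "nat \<Rightarrow> real" where
  "e0 = (\<lambda>i. if i = 0 then 1 else 0)"

definition ip :: "nat \<Rightarrow> (nat \<Rightarrow> real) \<Rightarrow> (nat \<Rightarrow> real) \<Rightarrow> real" where
  "ip n x y = (\<Sum>i\<in>{1..n}. x i * y i)"
definition nrm :: "nat \<Rightarrow> (nat \<Rightarrow> real) \<Rightarrow> real" where
  "nrm n x = sqrt (ip n x x)"

definition ball2 :: "nat \<Rightarrow> (nat \<Rightarrow> real) set" where
  "ball2 n = {x \<in> Rn n. nrm n x \<le> 1}"

definition polar :: "nat \<Rightarrow> (nat \<Rightarrow> real) set \<Rightarrow> (nat \<Rightarrow> real) set" where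
  "polar n L = {y \<in> Rn n. \<forall>z\<in>L. ip n y z \<le> 1}"

definition Qset :: "nat \<Rightarrow> (nat \<Rightarrow> nat \<Rightarrow> real) \<Rightarrow> (nat \<Rightarrow> real) set" where
  "Qset m x = convex hull ((\<lambda>i. x i) ` {1..m} \<union> (\<lambda>i. - x i) ` {1..m})"
definition Q1set :: "nat \<Rightarrow> nat \<Rightarrow> (nat \<Rightarrow> nat \<Rightarrow> real) \<Rightarrow> (nat \<Rightarrow> real) set" where
  "Q1set n m x = convex hull (Qset m x \<union> ball2 n)"
definition Q1polar :: "nat \<Rightarrow> nat \<Rightarrow> (nat \<Rightarrow> nat \<Rightarrow> real) \<Rightarrow> (nat \<Rightarrow> real) set" where
  "Q1polar n m x = polar n (Q1set n m x)"

definition Kset :: "nat \<Rightarrow> nat \<Rightarrow> (nat \<Rightarrow> nat \<Rightarrow> real) \<Rightarrow> real \<Rightarrow> real \<Rightarrow> (nat \<Rightarrow> real) set" where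
  "Kset n m x \<eta> \<kappa> = convex hull
     ((\<lambda>q. (1 - \<eta>) *\<^sub>R e0 + q) ` Qset m x \<union>
      (\<lambda>q. (- (\<kappa> * \<eta>)) *\<^sub>R e0 + \<kappa> *\<^sub>R q) ` Q1polar n m x)"

definition vertices :: "(nat \<Rightarrow> real) set \<Rightarrow> (nat \<Rightarrow> real) set" where
  "vertices P = {v. v extreme_point_of P}"

text \<open>Probability measures on R^n, realised as product measures over the index set {1..n}:
  standard Gaussian N(0,I_n); uniform on sqrt n B_2^n; uniform (normalised surface) measure on
  sqrt n S^(n-1), obtained as the image of the uniform measure on the ball under radial
  projection x |-> sqrt n x/|x|.\<close>
definition gauss_n :: "nat \<Rightarrow> (nat \<Rightarrow> real) measure" where
  "gauss_n n = PiM {1..n} (\<lambda>_. density lborel std_normal_density)"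
definition unif_ball_n :: "nat \<Rightarrow> (nat \<Rightarrow> real) measure" where
  "unif_ball_n n = uniform_measure (PiM {1..n} (\<lambda>_. lborel))
      {x \<in> space (PiM {1..n} (\<lambda>_. lborel :: real measure)). nrm n x \<le> sqrt (real n)}"
definition unif_sphere_n :: "nat \<Rightarrow> (nat \<Rightarrow> real) measure" where
  "unif_sphere_n n = distr (unif_ball_n n) (PiM {1..n} (\<lambda>_. borel))
      (\<lambda>x. restrict (\<lambda>i. sqrt (real n) * x i / nrm n x) {1..n})"

definition C1_prop :: "real \<Rightarrow> bool" where
  "C1_prop C1 \<longleftrightarrow> (\<exists>N. \<forall>n\<ge>N. \<forall>m::nat. 2 \<le> m \<and> real m \<le> exp (real n / C1) \<longrightarrow>
     (\<exists>y::nat \<Rightarrow> nat \<Rightarrow> real.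
        (\<forall>i\<in>{1..m}. y i \<in> Rn n \<and> sqrt (real n) / 2 \<le> nrm n (y i) \<and> nrm n (y i) \<le> 2 * sqrt (real n)) \<and>
        (\<forall>i\<in>{1..m}. \<forall>j\<in>{1..m}. i \<noteq> j \<longrightarrow>
            \<bar>ip n (y i) (y j)\<bar> \<le> C1 * sqrt (real n * ln (real m)))))"

definition C2_prop :: "real \<Rightarrow> bool" where
  "C2_prop C2 \<longleftrightarrow> (\<forall>n::nat\<ge>1. \<forall>m::nat\<ge>1. \<forall>v::nat \<Rightarrow> nat \<Rightarrow> real.
     (\<forall>j\<in>{1..m}. v j \<in> Rn n \<and> nrm n (v j) = 1) \<longrightarrow>
     (\<forall>M \<in> {gauss_n n, unif_sphere_n n, unif_ball_n n}.
        measure M {X \<in> space M. \<exists>j\<in>{1..m}. \<bar>ip n (v j) X\<bar> \<ge> C2 * sqrt (ln (real m))}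
          \<le> real m powr (-10)))"

end

theory Submission
  imports Defs
begin

text \<open>Write \<open>\<lambda> = n / (96 \<Delta>\<^sup>2 max \<kappa> 1)\<close> and \<open>L = \<surd>n / \<Delta>\<close>, so that \<open>L\<^sup>2 = 96 max \<kappa> 1 \<lambda>\<close>.
  The \<open>e\<^sub>0\<close>-coordinate is maximal on \<open>K\<close> at the point \<open>(1 - \<eta>) e\<^sub>0\<close>, which lies in
  \<open>\<lambda> P \<subseteq> \<lambda> K\<close>; hence \<open>\<lambda> \<ge> 1\<close>. Each lifted point \<open>(1 - \<eta>) e\<^sub>0 + x\<^sub>i\<close> of \<open>K\<close> lies in \<open>\<lambda> P\<close>, so some
  vertex \<open>v\<close> of \<open>P\<close> satisfies \<open>\<lambda> f\<^sub>i(v) \<ge> f\<^sub>i((1 - \<eta>) e\<^sub>0 + x\<^sub>i) = |x\<^sub>i|\<^sup>2 - L\<close>, where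
  \<open>f\<^sub>i(z) = \<langle>x\<^sub>i, z\<rangle> - L z\<^sub>0 / (1 - \<eta>)\<close>. If \<open>v\<close> does so for all \<open>i\<close> in a set \<open>S\<close>, then
  \<open>\<Sum>\<^sub>i\<^sub>\<in>\<^sub>S f\<^sub>i(v) / |x\<^sub>i|\<^sup>2 \<ge> |S| / (2 \<lambda>)\<close>. On the other hand, by the near-orthogonality of the
  \<open>x\<^sub>i\<close> this sum is at most \<open>1\<close> at the lifted points \<open>(1 - \<eta>) e\<^sub>0 \<plusminus> x\<^sub>j\<close> and at most
  \<open>12 \<kappa> |S| / L\<^sup>2\<close> on the polar part of \<open>K\<close>, hence at most \<open>1 + 12 \<kappa> |S| / L\<^sup>2\<close> on all of \<open>K\<close>.
  Comparing gives \<open>|S| \<le> L\<^sup>2 / 36 \<le> n\<close>, so \<open>P\<close> needs at least \<open>m / n\<close> vertices.\<close>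

text \<open>The library's \<open>Krein_Milman_polytope\<close> needs a Euclidean space, while the ambient
  space \<open>nat \<Rightarrow> real\<close> here is infinite-dimensional.\<close>

lemma polytope_eq_convex_hull_extreme_points:
  fixes P :: "'a::real_vector set"
  assumes "polytope P"
  shows "finite {v. v extreme_point_of P}" "convex hull {v. v extreme_point_of P} = P"
proof -
  let ?E = "{v. v extreme_point_of P}"
  obtain V where V: "finite V" "P = convex hull V"
    using assms unfolding polytope_def by blast
  have "?E \<subseteq> V"
    using V(2) extreme_point_of_convex_hull by blast
  then show "finite ?E"
    using V(1) finite_subset by blast
  obtain W where W: "W \<subseteq> V" "convex hull W = P"
    and W_min: "\<And>W'. W' \<subseteq> V \<Longrightarrow> convex hull W' = P \<Longrightarrow> card W \<le> card W'"
    using ex_has_least_nat[of "\<lambda>W. W \<subseteq> V \<and> convex hull W = P" V card] V(2) by auto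
  have "finite W"
    using W(1) V(1) finite_subset by blast
  have "W \<subseteq> ?E"
  proof
    fix a assume "a \<in> W"
    then have W_eq: "insert a (W - {a}) = W" by blast
    have "a \<notin> convex hull (W - {a})"
    proof
      assume "a \<in> convex hull (W - {a})"
      then have "convex hull (W - {a}) = P"
        using W(2) hull_redundant[of a convex "W - {a}"] W_eq by simp
      then have "card W \<le> card (W - {a})"
        using W(1) by (intro W_min) auto
      then show False
        using \<open>finite W\<close> \<open>a \<in> W\<close> card_Diff1_less by fastforce
    qed
    then have "a extreme_point_of convex hull (insert a (W - {a}))"
      using \<open>finite W\<close> by (intro extreme_point_of_convex_hull_insert) auto
    then show "a \<in> ?E"
      using W(2) W_eq by simp
  qed
  then have "convex hull W \<subseteq> convex hull ?E"
    by (rule hull_mono)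
  then have "P \<subseteq> convex hull ?E"
    using W(2) by simp
  moreover have "convex hull ?E \<subseteq> P"
    using _ polytope_imp_convex[OF assms] by (rule hull_minimal) (auto simp: extreme_point_of_def)
  ultimately show "convex hull ?E = P"
    by (rule antisym[rotated])
qed

lemma linear_le_on_convex_hull:
  fixes h :: "'a::real_vector \<Rightarrow> real"
  assumes "linear h" "z \<in> convex hull G" "\<And>g. g \<in> G \<Longrightarrow> h g \<le> c"
  shows "h z \<le> c"
proof -
  have "convex hull G \<subseteq> h -` {..c}"
    using assms(3) by (intro hull_minimal convex_linear_vimage[OF assms(1)]) auto
  then show ?thesis
    using assms(2) by auto
qed

lemma linear_le_at_extreme_point:
  fixes h :: "'a::real_vector \<Rightarrow> real"
  assumes "polytope P" "linear h" "u \<in> P"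
  obtains v where "v extreme_point_of P" "h u \<le> h v"
proof -
  let ?E = "{v. v extreme_point_of P}"
  note E = polytope_eq_convex_hull_extreme_points[OF assms(1)]
  then have "?E \<noteq> {}"
    using assms(3) by (metis convex_hull_empty empty_iff)
  then have "Max (h ` ?E) \<in> h ` ?E"
    using E(1) by (intro Max_in) auto
  then obtain v where v: "v \<in> ?E" "h v = Max (h ` ?E)"
    by auto
  have "u \<in> convex hull ?E"
    using assms(3) E(2) by simp
  then have "h u \<le> h v"
  proof (rule linear_le_on_convex_hull[OF assms(2)])
    fix g assume "g \<in> ?E"
    then show "h g \<le> h v"
      using E(1) v(2) by simp
  qed
  then show ?thesis
    using v(1) that by blast
qed

lemma card_le_card_extreme_points_mult:
  fixes f :: "'i \<Rightarrow> 'a::real_vector \<Rightarrow> real"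
  assumes "polytope P" "finite I"
    and "\<And>i. i \<in> I \<Longrightarrow> linear (f i)" "\<And>i. i \<in> I \<Longrightarrow> u i \<in> P"
    and "\<And>w. w \<in> P \<Longrightarrow> real (card {i \<in> I. f i (u i) \<le> f i w}) \<le> k"
  shows "real (card I) \<le> real (card {v. v extreme_point_of P}) * k"
proof -
  let ?E = "{v. v extreme_point_of P}"
  define S where "S v = {i \<in> I. f i (u i) \<le> f i v}" for v
  have "I \<subseteq> (\<Union>v\<in>?E. S v)"
  proof
    fix i assume "i \<in> I"
    then obtain v where "v extreme_point_of P" "f i (u i) \<le> f i v"
      using linear_le_at_extreme_point[OF assms(1)] assms(3,4) by metis
    then show "i \<in> (\<Union>v\<in>?E. S v)"
      using \<open>i \<in> I\<close> by (auto simp: S_def)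
  qed
  then have "card I \<le> card (\<Union>v\<in>?E. S v)"
    using polytope_eq_convex_hull_extreme_points(1)[OF assms(1)] assms(2)
    by (intro card_mono) (auto simp: S_def)
  also have "\<dots> \<le> (\<Sum>v\<in>?E. card (S v))"
    using polytope_eq_convex_hull_extreme_points(1)[OF assms(1)] by (rule card_UN_le)
  finally have "real (card I) \<le> (\<Sum>v\<in>?E. real (card (S v)))"
    by (metis of_nat_le_iff of_nat_sum)
  also have "\<dots> \<le> (\<Sum>v\<in>?E. k)"
    using assms(5) by (intro sum_mono) (auto simp: S_def extreme_point_of_def)
  also have "\<dots> = real (card ?E) * k"
    by simp
  finally show ?thesis .
qed

lemma dilation_factor_ge_1:
  fixes h :: "'a::real_vector \<Rightarrow> real"
  assumes "linear h" "K \<subseteq> (\<lambda>p. lam *\<^sub>R p) ` K" "0 \<le> lam"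
    and "z \<in> K" "\<And>y. y \<in> K \<Longrightarrow> h y \<le> h z" "0 < h z"
  shows "1 \<le> lam"
proof -
  obtain y where "y \<in> K" "z = lam *\<^sub>R y"
    using assms(2,4) by auto
  then have "h z \<le> lam * h z"
    using assms(1,3,5) by (simp add: linear_scale mult_left_mono)
  then show ?thesis
    using assms(6) by simp
qed

lemma scaleR_fun_apply [simp]: "(r *\<^sub>R z) i = r *\<^sub>R z i"
  by (simp add: scaleR_fun_def)

lemma ip_add_right [simp]: "ip n a (b + c) = ip n a b + ip n a c"
  by (simp add: ip_def sum.distrib algebra_simps)

lemma ip_scaleR_right [simp]: "ip n a (r *\<^sub>R b) = r * ip n a b"
  by (simp add: ip_def sum_distrib_left algebra_simps)

lemma ip_uminus_right [simp]: "ip n a (- b) = - ip n a b"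
  by (simp add: ip_def sum_negf)

lemma ip_diff_right [simp]: "ip n a (b - c) = ip n a b - ip n a c"
  by (simp add: ip_def sum_subtractf algebra_simps)

lemma ip_e0 [simp]: "ip n a e0 = 0"
  by (simp add: ip_def e0_def)

lemma e0_0 [simp]: "e0 0 = 1"
  by (simp add: e0_def)

lemma ip_commute: "ip n a b = ip n b a"
  by (simp add: ip_def mult.commute)

lemma ip_self_nonneg: "0 \<le> ip n a a"
  by (simp add: ip_def sum_nonneg)

lemma nrm_nonneg: "0 \<le> nrm n a"
  by (simp add: nrm_def ip_self_nonneg)

lemma linear_coordinate: "linear (\<lambda>z :: nat \<Rightarrow> real. z k)"
  by (rule linearI) simp_all

lemma Rn_coordinate_0: "z \<in> Rn n \<Longrightarrow> z 0 = 0"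
  by (simp add: Rn_def supp_in_def)

lemma convex_Rn: "convex (Rn n)"
  by (simp add: convex_def Rn_def supp_in_def)

lemma Qset_subset_Rn:
  assumes "\<And>i. i \<in> {1..m} \<Longrightarrow> x i \<in> Rn n"
  shows "Qset m x \<subseteq> Rn n"
  unfolding Qset_def using assms
  by (intro hull_minimal convex_Rn) (auto simp: Rn_def supp_in_def)

lemma Qset_coordinate_0:
  assumes "\<And>i. i \<in> {1..m} \<Longrightarrow> x i \<in> Rn n" "q \<in> Qset m x"
  shows "q 0 = 0"
  using Qset_subset_Rn[of m x n] assms Rn_coordinate_0 by blast

lemma Q1polar_coordinate_0: "r \<in> Q1polar n m x \<Longrightarrow> r 0 = 0"
  by (auto simp: Q1polar_def polar_def Rn_coordinate_0)

lemma x_mem_Qset: "i \<in> {1..m} \<Longrightarrow> x i \<in> Qset m x"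
  unfolding Qset_def by (rule hull_inc) auto

lemma uminus_x_mem_Qset: "i \<in> {1..m} \<Longrightarrow> - x i \<in> Qset m x"
  unfolding Qset_def by (rule hull_inc) auto

lemma zero_mem_Qset:
  assumes "1 \<le> m"
  shows "0 \<in> Qset m x"
proof -
  have "(1/2) *\<^sub>R x 1 + (1/2) *\<^sub>R (- x 1) \<in> Qset m x"
    using assms x_mem_Qset uminus_x_mem_Qset unfolding Qset_def
    by (intro convexD[OF convex_convex_hull]) auto
  then show ?thesis
    by simp
qed

lemma ip_x_le_1_if_mem_Q1polar:
  assumes "i \<in> {1..m}" "r \<in> Q1polar n m x"
  shows "ip n (x i) r \<le> 1"
proof -
  have "x i \<in> Q1set n m x"
    unfolding Q1set_def using x_mem_Qset[OF assms(1)] by (intro hull_inc) auto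
  then show ?thesis
    using assms(2) by (auto simp: Q1polar_def polar_def ip_commute)
qed

lemma lift_mem_Kset: "q \<in> Qset m x \<Longrightarrow> (1 - \<eta>) *\<^sub>R e0 + q \<in> Kset n m x \<eta> \<kappa>"
  unfolding Kset_def by (rule hull_inc) auto

lemma Kset_coordinate_0_le:
  assumes "\<And>i. i \<in> {1..m} \<Longrightarrow> x i \<in> Rn n" "0 \<le> \<kappa> * \<eta>" "\<eta> \<le> 1"
    and "z \<in> Kset n m x \<eta> \<kappa>"
  shows "z 0 \<le> 1 - \<eta>"
proof (rule linear_le_on_convex_hull[OF linear_coordinate assms(4)[unfolded Kset_def]])
  fix g
  assume "g \<in> (\<lambda>q. (1 - \<eta>) *\<^sub>R e0 + q) ` Qset m x \<union>
    (\<lambda>q. (- (\<kappa> * \<eta>)) *\<^sub>R e0 + \<kappa> *\<^sub>R q) ` Q1polar n m x"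
  then consider (lift) q where "q \<in> Qset m x" "g = (1 - \<eta>) *\<^sub>R e0 + q"
    | (polar) r where "r \<in> Q1polar n m x" "g = (- (\<kappa> * \<eta>)) *\<^sub>R e0 + \<kappa> *\<^sub>R r"
    by blast
  then show "g 0 \<le> 1 - \<eta>"
  proof cases
    case lift
    then show ?thesis
      using Qset_coordinate_0[of m x n q] assms(1) by simp
  next
    case polar
    then show ?thesis
      using Q1polar_coordinate_0[of r] assms(2,3) by simp
  qed
qed

lemma Kset_dilation_factor_ge_1:
  assumes "\<And>i. i \<in> {1..m} \<Longrightarrow> x i \<in> Rn n" "1 \<le> m" "0 \<le> \<kappa>" "0 \<le> \<eta>" "\<eta> < 1"
    and "P \<subseteq> Kset n m x \<eta> \<kappa>" "Kset n m x \<eta> \<kappa> \<subseteq> (\<lambda>p. lam *\<^sub>R p) ` P" "0 \<le> lam"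
  shows "1 \<le> lam"
proof (rule dilation_factor_ge_1[OF linear_coordinate[of 0] _ assms(8)])
  show "Kset n m x \<eta> \<kappa> \<subseteq> (\<lambda>p. lam *\<^sub>R p) ` Kset n m x \<eta> \<kappa>"
    using assms(6,7) by blast
  show "(1 - \<eta>) *\<^sub>R e0 + 0 \<in> Kset n m x \<eta> \<kappa>"
    using lift_mem_Kset zero_mem_Qset[OF assms(2)] by blast
  show "y 0 \<le> ((1 - \<eta>) *\<^sub>R e0 + 0) 0" if "y \<in> Kset n m x \<eta> \<kappa>" for y
    using Kset_coordinate_0_le[OF assms(1) _ _ that] assms(3-5) by simp
  show "0 < ((1 - \<eta>) *\<^sub>R e0 + 0) 0"
    using assms(5) by simp
qed

locale almost_orthogonal_family =
  fixes n m :: nat and x :: "nat \<Rightarrow> nat \<Rightarrow> real" and L \<eta> \<kappa> :: real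
  assumes x_in_Rn: "i \<in> {1..m} \<Longrightarrow> x i \<in> Rn n"
    and nrm_x_ge: "i \<in> {1..m} \<Longrightarrow> L \<le> 2 * nrm n (x i)"
    and ip_x_le: "i \<in> {1..m} \<Longrightarrow> j \<in> {1..m} \<Longrightarrow> i \<noteq> j \<Longrightarrow> \<bar>ip n (x i) (x j)\<bar> \<le> L"
    and L_ge_8: "8 \<le> L"
    and kappa_pos: "0 < \<kappa>"
    and eta_le_half: "\<eta> \<le> 1/2" and L_eta_le_1: "L * \<eta> \<le> 1"
begin

text \<open>The weight of the \<open>e\<^sub>0\<close>-coordinate is chosen so that \<open>lifted_ip i\<close> takes the value
  \<open>\<langle>x\<^sub>i, x\<^sub>j\<rangle> - L\<close> at the lifted point \<open>(1 - \<eta>) e\<^sub>0 + x\<^sub>j\<close>.\<close>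

definition lifted_ip :: "nat \<Rightarrow> (nat \<Rightarrow> real) \<Rightarrow> real" where
  "lifted_ip i z = ip n (x i) z - L / (1 - \<eta>) * z 0"

definition lifted_ip_sum :: "nat set \<Rightarrow> (nat \<Rightarrow> real) \<Rightarrow> real" where
  "lifted_ip_sum S z = (\<Sum>i\<in>S. lifted_ip i z / ip n (x i) (x i))"

lemma linear_lifted_ip: "linear (lifted_ip i)"
  by (rule linearI) (simp_all add: lifted_ip_def algebra_simps add_divide_distrib)

lemma linear_lifted_ip_sum: "linear (lifted_ip_sum S)"
  by (rule linearI)
    (simp_all add: lifted_ip_sum_def linear_add[OF linear_lifted_ip] linear_scale[OF linear_lifted_ip]
      add_divide_distrib sum.distrib sum_distrib_left)

lemma ip_self_ge: "i \<in> {1..m} \<Longrightarrow> L\<^sup>2 / 4 \<le> ip n (x i) (x i)"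
proof -
  assume "i \<in> {1..m}"
  then have "L\<^sup>2 \<le> (2 * nrm n (x i))\<^sup>2"
    using nrm_x_ge L_ge_8 by (intro power_mono) auto
  then show ?thesis
    by (simp add: nrm_def ip_self_nonneg power_mult_distrib)
qed

lemma ip_self_pos: "i \<in> {1..m} \<Longrightarrow> 0 < ip n (x i) (x i)"
  using ip_self_ge L_ge_8 by (auto intro: less_le_trans[of 0 "L\<^sup>2 / 4"])

lemma lifted_ip_lift:
  assumes "q \<in> Qset m x"
  shows "lifted_ip i ((1 - \<eta>) *\<^sub>R e0 + q) = ip n (x i) q - L"
  using Qset_coordinate_0[OF x_in_Rn assms] eta_le_half
  by (simp add: lifted_ip_def)

lemma lifted_ip_lift_x_div_le:
  assumes "i \<in> {1..m}" "j \<in> {1..m}"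
  shows "lifted_ip i ((1 - \<eta>) *\<^sub>R e0 + x j) / ip n (x i) (x i) \<le> (if i = j then 1 else 0)"
proof (cases "i = j")
  case True
  then show ?thesis
    using lifted_ip_lift[OF x_mem_Qset[OF assms(2)]] ip_self_pos[OF assms(1)] L_ge_8
    by (simp add: divide_le_eq)
next
  case False
  then show ?thesis
    using lifted_ip_lift[OF x_mem_Qset[OF assms(2)]] ip_self_pos[OF assms(1)] ip_x_le[OF assms False]
    by (simp add: divide_le_0_iff)
qed

lemma lifted_ip_lift_uminus_x_le:
  assumes "i \<in> {1..m}" "j \<in> {1..m}"
  shows "lifted_ip i ((1 - \<eta>) *\<^sub>R e0 + - x j) \<le> 0"
proof (cases "i = j")
  case True
  then show ?thesis
    using lifted_ip_lift[OF uminus_x_mem_Qset[OF assms(2)]] ip_self_pos[OF assms(1)] L_ge_8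
    by simp
next
  case False
  then show ?thesis
    using lifted_ip_lift[OF uminus_x_mem_Qset[OF assms(2)]] ip_x_le[OF assms False] by simp
qed

lemma lifted_ip_polar_le:
  assumes "i \<in> {1..m}" "r \<in> Q1polar n m x"
  shows "lifted_ip i ((- (\<kappa> * \<eta>)) *\<^sub>R e0 + \<kappa> *\<^sub>R r) \<le> 3 * \<kappa>"
proof -
  have "L * \<eta> / (1 - \<eta>) \<le> 2"
    using L_eta_le_1 eta_le_half by (simp add: divide_le_eq)
  then have "\<kappa> * (L * \<eta> / (1 - \<eta>)) \<le> \<kappa> * 2"
    using kappa_pos by (intro mult_left_mono) auto
  moreover have "\<kappa> * ip n (x i) r \<le> \<kappa> * 1"
    using ip_x_le_1_if_mem_Q1polar[OF assms] kappa_pos by (intro mult_left_mono) auto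
  ultimately show ?thesis
    using Q1polar_coordinate_0[OF assms(2)] by (simp add: lifted_ip_def algebra_simps)
qed

lemma lifted_ip_sum_lift_le:
  assumes "S \<subseteq> {1..m}" "q \<in> Qset m x"
  shows "lifted_ip_sum S ((1 - \<eta>) *\<^sub>R e0 + q) \<le> 1"
proof -
  let ?lift = "\<lambda>q. (1 - \<eta>) *\<^sub>R e0 + q"
  have "?lift q \<in> convex hull (?lift ` (x ` {1..m} \<union> (\<lambda>i. - x i) ` {1..m}))"
    using assms(2) by (simp add: Qset_def convex_hull_translation)
  then show ?thesis
  proof (rule linear_le_on_convex_hull[OF linear_lifted_ip_sum])
    fix g assume "g \<in> ?lift ` (x ` {1..m} \<union> (\<lambda>i. - x i) ` {1..m})"
    then consider (plus) j where "j \<in> {1..m}" "g = ?lift (x j)"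
      | (minus) j where "j \<in> {1..m}" "g = ?lift (- x j)"
      by blast
    then show "lifted_ip_sum S g \<le> 1"
    proof cases
      case plus
      have "lifted_ip_sum S g \<le> (\<Sum>i\<in>S. if i = j then 1 else 0)"
        unfolding lifted_ip_sum_def plus(2)
        using assms(1) plus(1) by (intro sum_mono lifted_ip_lift_x_div_le) auto
      also have "\<dots> \<le> 1"
        using finite_subset[OF assms(1)] by simp
      finally show ?thesis .
    next
      case minus
      have "lifted_ip_sum S g \<le> 0"
        unfolding lifted_ip_sum_def minus(2) using assms(1) minus(1)
        by (intro sum_nonpos divide_nonpos_nonneg lifted_ip_lift_uminus_x_le ip_self_nonneg) auto
      then show ?thesis
        by simp
    qed
  qed
qed

lemma lifted_ip_sum_polar_le:
  assumes "S \<subseteq> {1..m}" "r \<in> Q1polar n m x"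
  shows "lifted_ip_sum S ((- (\<kappa> * \<eta>)) *\<^sub>R e0 + \<kappa> *\<^sub>R r) \<le> 12 * \<kappa> * card S / L\<^sup>2"
proof -
  have "lifted_ip i ((- (\<kappa> * \<eta>)) *\<^sub>R e0 + \<kappa> *\<^sub>R r) / ip n (x i) (x i) \<le> 12 * \<kappa> / L\<^sup>2"
    if "i \<in> S" for i
  proof -
    have i: "i \<in> {1..m}"
      using that assms(1) by auto
    have "lifted_ip i ((- (\<kappa> * \<eta>)) *\<^sub>R e0 + \<kappa> *\<^sub>R r) / ip n (x i) (x i)
        \<le> 3 * \<kappa> / ip n (x i) (x i)"
      using lifted_ip_polar_le[OF i assms(2)] ip_self_pos[OF i] by (intro divide_right_mono) auto
    also have "\<dots> \<le> 3 * \<kappa> / (L\<^sup>2 / 4)"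
      using ip_self_ge[OF i] ip_self_pos[OF i] L_ge_8 kappa_pos by (intro divide_left_mono) auto
    finally show ?thesis
      by simp
  qed
  then have "lifted_ip_sum S ((- (\<kappa> * \<eta>)) *\<^sub>R e0 + \<kappa> *\<^sub>R r) \<le> card S * (12 * \<kappa> / L\<^sup>2)"
    unfolding lifted_ip_sum_def by (rule sum_bounded_above)
  then show ?thesis
    by (simp add: algebra_simps)
qed

lemma lifted_ip_sum_Kset_le:
  assumes "S \<subseteq> {1..m}" "z \<in> Kset n m x \<eta> \<kappa>"
  shows "lifted_ip_sum S z \<le> 1 + 12 * \<kappa> * card S / L\<^sup>2"
  using assms(2) unfolding Kset_def
proof (rule linear_le_on_convex_hull[OF linear_lifted_ip_sum])
  have "0 \<le> 12 * \<kappa> * card S / L\<^sup>2"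
    using kappa_pos by simp
  then show "lifted_ip_sum S g \<le> 1 + 12 * \<kappa> * card S / L\<^sup>2"
    if "g \<in> (\<lambda>q. (1 - \<eta>) *\<^sub>R e0 + q) ` Qset m x \<union>
      (\<lambda>r. (- (\<kappa> * \<eta>)) *\<^sub>R e0 + \<kappa> *\<^sub>R r) ` Q1polar n m x" for g
    using that lifted_ip_sum_lift_le[OF assms(1)] lifted_ip_sum_polar_le[OF assms(1)] by fastforce
qed

lemma card_served_le:
  assumes "0 < lam" "96 * max \<kappa> 1 * lam \<le> L\<^sup>2" "w \<in> Kset n m x \<eta> \<kappa>"
  shows "36 * real (card {i \<in> {1..m}. ip n (x i) (x i) - L \<le> lam * lifted_ip i w}) \<le> L\<^sup>2"
proof -
  define S where "S = {i \<in> {1..m}. ip n (x i) (x i) - L \<le> lam * lifted_ip i w}"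
  define M where "M = max \<kappa> 1"
  have L_pos: "0 < L"
    using L_ge_8 by simp
  have "1 / (2 * lam) \<le> lifted_ip i w / ip n (x i) (x i)" if "i \<in> S" for i
  proof -
    have i: "i \<in> {1..m}" and served: "ip n (x i) (x i) - L \<le> lam * lifted_ip i w"
      using that by (auto simp: S_def)
    have "2 * L \<le> L\<^sup>2 / 4"
      using L_ge_8 by (simp add: power2_eq_square field_simps)
    then have "ip n (x i) (x i) \<le> 2 * (ip n (x i) (x i) - L)"
      using ip_self_ge[OF i] by simp
    also have "\<dots> \<le> 2 * lam * lifted_ip i w"
      using served by simp
    finally show ?thesis
      using ip_self_pos[OF i] assms(1) by (simp add: field_simps)
  qed
  then have "card S * (1 / (2 * lam)) \<le> lifted_ip_sum S w"
    unfolding lifted_ip_sum_def by (rule sum_bounded_below)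
  also have "\<dots> \<le> 1 + 12 * \<kappa> * card S / L\<^sup>2"
    by (rule lifted_ip_sum_Kset_le[OF _ assms(3)]) (auto simp: S_def)
  finally have "card S * L\<^sup>2 / (2 * lam) \<le> L\<^sup>2 + 12 * \<kappa> * card S"
    using L_pos by (simp add: field_simps)
  moreover have "card S * (96 * M * lam) \<le> card S * L\<^sup>2"
    using assms(2) by (intro mult_left_mono) (auto simp: M_def)
  then have "48 * M * card S \<le> card S * L\<^sup>2 / (2 * lam)"
    using assms(1) by (simp add: pos_le_divide_eq algebra_simps)
  moreover have "\<kappa> * card S \<le> M * card S" and "1 * real (card S) \<le> M * card S"
    by (intro mult_right_mono; simp add: M_def)+
  ultimately have "36 * card S \<le> L\<^sup>2"
    by linarith
  then show ?thesis
    by (simp add: S_def)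
qed

lemma card_vertices_bound:
  assumes "polytope P" "P \<subseteq> Kset n m x \<eta> \<kappa>" "Kset n m x \<eta> \<kappa> \<subseteq> (\<lambda>p. lam *\<^sub>R p) ` P"
    and "0 < lam" "96 * max \<kappa> 1 * lam \<le> L\<^sup>2"
  shows "36 * real m \<le> real (card (vertices P)) * L\<^sup>2"
proof -
  define u where "u i = inverse lam *\<^sub>R ((1 - \<eta>) *\<^sub>R e0 + x i)" for i
  have "u i \<in> P" if i: "i \<in> {1..m}" for i
  proof -
    obtain p where "p \<in> P" "(1 - \<eta>) *\<^sub>R e0 + x i = lam *\<^sub>R p"
      using lift_mem_Kset[OF x_mem_Qset[OF i]] assms(3) by blast
    then show ?thesis
      using assms(4) by (simp add: u_def)
  qed
  moreover have "real (card {i \<in> {1..m}. lifted_ip i (u i) \<le> lifted_ip i w}) \<le> L\<^sup>2 / 36"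
    if "w \<in> P" for w
  proof -
    have "lifted_ip i (u i) = (ip n (x i) (x i) - L) / lam" if "i \<in> {1..m}" for i
      unfolding u_def linear_scale[OF linear_lifted_ip] lifted_ip_lift[OF x_mem_Qset[OF that]]
      by (simp add: divide_inverse mult.commute)
    then have "{i \<in> {1..m}. lifted_ip i (u i) \<le> lifted_ip i w}
        = {i \<in> {1..m}. ip n (x i) (x i) - L \<le> lam * lifted_ip i w}"
      using assms(4) by (auto simp: pos_divide_le_eq mult.commute)
    moreover have "w \<in> Kset n m x \<eta> \<kappa>"
      using that assms(2) by blast
    ultimately show ?thesis
      using card_served_le[OF assms(4,5)] by (simp add: mult.commute)
  qed
  ultimately have "real (card {1..m}) \<le> real (card {v. v extreme_point_of P}) * (L\<^sup>2 / 36)"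
    by (intro card_le_card_extreme_points_mult[OF assms(1) _ linear_lifted_ip]) auto
  then show ?thesis
    by (simp add: vertices_def)
qed

end

lemma le_half_if_le_inverse_sqrt:
  fixes n :: nat
  assumes "4 \<le> n" "t \<le> 1 / sqrt n"
  shows "t \<le> 1/2"
proof -
  have "2 \<le> sqrt n"
    using assms(1) real_sqrt_le_mono[of 4 n] by simp
  then have "1 / sqrt n \<le> 1/2"
    using assms(1) by (intro divide_left_mono) auto
  then show ?thesis
    using assms(2) by linarith
qed

lemma card_vertices_Kset_ge:
  fixes P :: "(nat \<Rightarrow> real) set"
  assumes n: "4 \<le> n" and \<Delta>: "1 \<le> \<Delta>" and m: "1 \<le> m"
    and x_in_Rn: "\<And>i. i \<in> {1..m} \<Longrightarrow> x i \<in> Rn n"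
    and nrm_x_ge: "\<And>i. i \<in> {1..m} \<Longrightarrow> sqrt n / (2 * \<Delta>) \<le> nrm n (x i)"
    and ip_x_le: "\<And>i j. i \<in> {1..m} \<Longrightarrow> j \<in> {1..m} \<Longrightarrow> i \<noteq> j \<Longrightarrow>
      \<bar>ip n (x i) (x j)\<bar> \<le> sqrt n / \<Delta>"
    and \<kappa>: "0 < \<kappa>" and \<eta>: "0 \<le> \<eta>" "\<eta> \<le> 1 / sqrt n"
    and P: "polytope P" "P \<subseteq> Kset n m x \<eta> \<kappa>"
      "Kset n m x \<eta> \<kappa> \<subseteq> (\<lambda>p. (n / (96 * \<Delta>\<^sup>2 * max \<kappa> 1)) *\<^sub>R p) ` P"
  shows "real m \<le> real (card (vertices P)) * n"
proof -
  define L where "L = sqrt n / \<Delta>"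
  define lam where "lam = n / (96 * \<Delta>\<^sup>2 * max \<kappa> 1)"
  have "0 < n"
    using n by simp
  have "\<eta> \<le> 1/2"
    using le_half_if_le_inverse_sqrt[OF n \<eta>(2)] .
  then have "1 \<le> lam"
    using Kset_dilation_factor_ge_1[OF x_in_Rn m _ \<eta>(1) _ P(2)] P(3) \<kappa> by (simp add: lam_def)
  have L2: "L\<^sup>2 = 96 * max \<kappa> 1 * lam"
    using \<Delta> by (simp add: L_def lam_def power_divide)
  have "1 * 1 \<le> max \<kappa> 1 * lam"
    using \<open>1 \<le> lam\<close> by (intro mult_mono) auto
  then have "64 \<le> L\<^sup>2"
    unfolding L2 mult.assoc by linarith
  then have "8\<^sup>2 \<le> L\<^sup>2"
    by simp
  moreover have "0 \<le> L"
    using \<Delta> by (simp add: L_def)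
  ultimately have "8 \<le> L"
    by (rule power2_le_imp_le)
  have "L * \<eta> \<le> L * (1 / sqrt n)"
    using \<eta>(2) \<open>8 \<le> L\<close> by (intro mult_left_mono) auto
  also have "\<dots> \<le> 1"
    using \<Delta> \<open>0 < n\<close> by (simp add: L_def)
  finally have "L * \<eta> \<le> 1" .
  moreover have "L \<le> 2 * nrm n (x i)" if "i \<in> {1..m}" for i
    using nrm_x_ge[OF that] \<Delta> by (simp add: L_def field_simps)
  ultimately interpret almost_orthogonal_family n m x L \<eta> \<kappa>
    using x_in_Rn ip_x_le \<kappa> \<open>\<eta> \<le> 1/2\<close> \<open>8 \<le> L\<close>
    by unfold_locales (auto simp: L_def)
  have bound: "36 * real m \<le> real (card (vertices P)) * L\<^sup>2"
    using card_vertices_bound[OF P(1,2) P(3)[folded lam_def]] \<open>1 \<le> lam\<close> L2 by simp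
  have "real n * 1 \<le> real n * \<Delta>\<^sup>2"
    using \<Delta> by (intro mult_left_mono one_le_power) auto
  then have "L\<^sup>2 \<le> n"
    using \<Delta> by (simp add: L_def power_divide divide_le_eq)
  then have "real (card (vertices P)) * L\<^sup>2 \<le> real (card (vertices P)) * n"
    by (intro mult_left_mono) auto
  then show ?thesis
    using bound by linarith
qed

lemma one_le_mult_sqrt_ln:
  assumes "0 < c" "exp (1 / c\<^sup>2) \<le> t"
  shows "1 \<le> c * sqrt (ln t)"
proof -
  have "1 / c\<^sup>2 \<le> ln t"
    using assms(2) by (metis exp_gt_zero exp_le_cancel_iff exp_ln order_less_le_trans)
  then have "sqrt (1 / c\<^sup>2) \<le> sqrt (ln t)"
    by (rule real_sqrt_le_mono)
  then show ?thesis
    using assms(1) by (simp add: real_sqrt_divide field_simps)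
qed

lemma card_vertices_ge_if_large_n:
  fixes P :: "(nat \<Rightarrow> real) set"
  assumes n: "4 \<le> n" "exp (1 / C0\<^sup>2) / C0 \<le> n" and m: "C0 * n \<le> m"
    and \<Delta>: "\<Delta> = C0 * sqrt (ln m)"
    and x_in_Rn: "\<And>i. i \<in> {1..m} \<Longrightarrow> x i \<in> Rn n"
    and nrm_x: "\<And>i. i \<in> {1..m} \<Longrightarrow> sqrt n / (2 * \<Delta>) \<le> nrm n (x i) \<and> nrm n (x i) \<le> 2 * sqrt n / \<Delta>"
    and ip_x_le: "\<And>i j. i \<in> {1..m} \<Longrightarrow> j \<in> {1..m} \<Longrightarrow> i \<noteq> j \<Longrightarrow>
      \<bar>ip n (x i) (x j)\<bar> \<le> sqrt n / \<Delta>"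
    and \<kappa>: "0 < \<kappa>" and \<eta>: "0 \<le> \<eta>" "\<eta> \<le> 1 / sqrt n"
    and P: "polytope P" "P \<subseteq> Kset n m x \<eta> \<kappa>"
      "Kset n m x \<eta> \<kappa> \<subseteq> (\<lambda>p. (n / (96 * \<Delta>\<^sup>2 * max \<kappa> 1)) *\<^sub>R p) ` P"
  shows "real m / real n \<le> real (card (vertices P))"
proof (cases "m = 0")
  case False
  then have "1 \<in> {1..m}"
    by simp
  have "\<Delta> \<noteq> 0"
    using Kset_dilation_factor_ge_1[OF x_in_Rn _ _ \<eta>(1) _ P(2), of 0] False \<kappa>
      le_half_if_le_inverse_sqrt[OF n(1) \<eta>(2)] P(3) by auto
  moreover have "0 \<le> 2 * sqrt n / \<Delta>"
    using nrm_nonneg[of n "x 1"] nrm_x[OF \<open>1 \<in> {1..m}\<close>] by linarith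
  ultimately have "0 < \<Delta>"
    using n(1) by (simp add: zero_le_divide_iff)
  moreover have "0 \<le> ln m"
    using False by simp
  ultimately have "0 < C0"
    using \<Delta> by (auto simp: zero_less_mult_iff)
  then have "1 \<le> \<Delta>"
    unfolding \<Delta> using n(2) m by (intro one_le_mult_sqrt_ln) (auto simp: divide_le_eq mult.commute)
  then have "real m \<le> real (card (vertices P)) * n"
    using n(1) False x_in_Rn nrm_x ip_x_le \<kappa> \<eta> P by (intro card_vertices_Kset_ge) auto
  then show ?thesis
    using n(1) by (simp add: divide_le_eq)
qed simp

theorem lemma3p6:
  fixes C1 C2 :: real
  assumes hC1: "C1_prop C1"
    and hC2: "C2_prop C2"
  shows "\<exists>N::nat. \<forall>n\<ge>N. \<forall>(m::nat) (x::nat \<Rightarrow> nat \<Rightarrow> real) (\<eta>::real) (\<kappa>::real) P.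
    (let C0 = max C1 (100 * C2); \<Delta> = C0 * sqrt (ln (real m)) in
      C0 * real n \<le> real m \<and> real m \<le> exp (real n / C0) \<and>
      (\<forall>i\<in>{1..m}. x i \<in> Rn n \<and> sqrt (real n) / (2 * \<Delta>) \<le> nrm n (x i)
                   \<and> nrm n (x i) \<le> 2 * sqrt (real n) / \<Delta>) \<and>
      (\<forall>i\<in>{1..m}. \<forall>j\<in>{1..m}. i \<noteq> j \<longrightarrow> \<bar>ip n (x i) (x j)\<bar> \<le> sqrt (real n) / \<Delta>) \<and>
      0 < \<kappa> \<and> 0 \<le> \<eta> \<and> \<eta> \<le> 1 / sqrt (real n) \<and>
      polytope P \<and> P \<subseteq> Rn1 n \<and>
      P \<subseteq> Kset n m x \<eta> \<kappa> \<and>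
      Kset n m x \<eta> \<kappa> \<subseteq> (\<lambda>p. (real n / (96 * \<Delta>\<^sup>2 * max \<kappa> 1)) *\<^sub>R p) ` P
    \<longrightarrow> real (card (vertices P)) \<ge> real m / real n)"
proof -
  define C0 where "C0 = max C1 (100 * C2)"
  define N where "N = max 4 (nat \<lceil>exp (1 / C0\<^sup>2) / C0\<rceil>)"
  have "4 \<le> n" "exp (1 / C0\<^sup>2) / C0 \<le> n" if "N \<le> n" for n
    using that by (auto simp: N_def nat_le_iff ceiling_le_iff)
  then show ?thesis
    unfolding Let_def C0_def[symmetric]
    by (intro exI[of _ N] allI impI, elim conjE) (rule card_vertices_ge_if_large_n; blast)
qed

end
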